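(* Let $(X,d)$ be a compact metric space and $f_{1,\infty}$ a commutative sequence of continuous self-maps of $X$. The following are equivalent: (1) $(X,f_{1,\infty})$ is weakly mixing; (2) $(\mathcal{K}(X),\overline{f}_{1,\infty})$ is weakly mixing; (3) $(\mathcal{K}(X),\overline{f}_{1,\infty})$ is topologically transitive.
   Context: Commutative: $f_i\circ f_j=f_j\circ f_i$ for all $i,j$. Write $f_1^n=f_n\circ\cdots\circ f_1$. $\mathcal{K}(X)$ is the hyperspace of non-empty compact subsets of $X$ with the Vietoris topology (equivalently the Hausdorff metric), and $\overline{f}_n(K)=f_n(K)$, so $\overline{f}_1^n(K)=f_1^n(K)$. A non-autonomous system $(Y,g_{1,\infty})$ is topologically transitive if for all non-empty open $U,V$ there is $n\in\mathbb{N}$ with $g_1^n(U)\cap V\ne\emptyset$, and weakly mixing if for all non-empty open $U_1,U_2,V_1,V_2$ there is $n\in\mathbb{N}$ with $g_1^n(U_i)\cap V_i\ne\emptyset$ for $i=1,2$. *)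

theory Defs
  imports "HOL-Analysis.Analysis"
begin

text \<open>Non-autonomous composition: \<open>fcomp_seq f n = f n \<circ> \<dots> \<circ> f 1\<close>
  (the maps are indexed from 1; \<open>fcomp_seq f 0 = id\<close>).\<close>
primrec fcomp_seq :: "(nat \<Rightarrow> 'b \<Rightarrow> 'b) \<Rightarrow> nat \<Rightarrow> 'b \<Rightarrow> 'b" where
  "fcomp_seq f 0 = id"
| "fcomp_seq f (Suc n) = f (Suc n) \<circ> fcomp_seq f n"

definition na_transitive :: "'b topology \<Rightarrow> (nat \<Rightarrow> 'b \<Rightarrow> 'b) \<Rightarrow> bool" where
  "na_transitive T g \<longleftrightarrow>
     (\<forall>U V. openin T U \<and> U \<noteq> {} \<and> openin T V \<and> V \<noteq> {} \<longrightarrow>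
        (\<exists>n\<ge>1. fcomp_seq g n ` U \<inter> V \<noteq> {}))"

definition na_weakly_mixing :: "'b topology \<Rightarrow> (nat \<Rightarrow> 'b \<Rightarrow> 'b) \<Rightarrow> bool" where
  "na_weakly_mixing T g \<longleftrightarrow>
     (\<forall>U1 U2 V1 V2. openin T U1 \<and> U1 \<noteq> {} \<and> openin T U2 \<and> U2 \<noteq> {} \<and>
                    openin T V1 \<and> V1 \<noteq> {} \<and> openin T V2 \<and> V2 \<noteq> {} \<longrightarrow>
        (\<exists>n\<ge>1. fcomp_seq g n ` U1 \<inter> V1 \<noteq> {} \<and> fcomp_seq g n ` U2 \<inter> V2 \<noteq> {}))"

definition hyperspace :: "'a::topological_space set set" where
  "hyperspace = {K. compact K \<and> K \<noteq> {}}"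

text \<open>The Vietoris topology on the hyperspace, generated by the subbasic sets
  \<open>\<langle>U\<rangle> = {K. K \<subseteq> U}\<close> and \<open>[U] = {K. K \<inter> U \<noteq> {}}\<close>, U open.\<close>
definition vietoris :: "'a::topological_space set topology" where
  "vietoris = topology_generated_by
     ({{K \<in> hyperspace. K \<subseteq> U} | U. open U} \<union> {{K \<in> hyperspace. K \<inter> U \<noteq> {}} | U. open U})"

definition induced :: "(nat \<Rightarrow> 'a \<Rightarrow> 'a) \<Rightarrow> nat \<Rightarrow> 'a set \<Rightarrow> 'a set" where
  "induced f n K = f n ` K"

end

theory Submission
  imports Defs
begin

text \<open>For a commutative system, weak mixing already hits any finite family of pairs of
  non-empty open sets at a common time. Every Vietoris open set contains a basic set
  \<open>\<langle>U\<^sub>1, \<dots>, U\<^sub>k\<rangle>\<close>; hitting all pairs of basic open sets of the four given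
  neighbourhoods at once yields a finite set of witnesses lying in the first basic set whose
  image lies in the second, so the induced system is weakly mixing. Conversely, transitivity
  on the hyperspace applied to \<open>\<langle>U\<rangle>\<close> and \<open>[V\<^sub>1] \<inter> [V\<^sub>2]\<close> makes a single open set hit two
  targets at a common time; doing this twice and commuting the two times gives weak mixing
  of the base system.\<close>

lemma fcomp_seq_commute_single:
  assumes comm: "\<And>i j. i \<ge> 1 \<Longrightarrow> j \<ge> 1 \<Longrightarrow> f i \<circ> f j = f j \<circ> f i"
    and "i \<ge> 1"
  shows "f i \<circ> fcomp_seq f n = fcomp_seq f n \<circ> f i"
proof (induction n)
  case (Suc n)
  have "f i \<circ> fcomp_seq f (Suc n) = (f i \<circ> f (Suc n)) \<circ> fcomp_seq f n"
    by (simp add: comp_assoc)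
  also have "\<dots> = f (Suc n) \<circ> (f i \<circ> fcomp_seq f n)"
    using comm[OF \<open>i \<ge> 1\<close>, of "Suc n"] by (simp only: comp_assoc)
  also have "\<dots> = fcomp_seq f (Suc n) \<circ> f i"
    using Suc.IH by (simp only: fcomp_seq.simps comp_assoc)
  finally show ?case .
qed simp

lemma fcomp_seq_commute:
  assumes "\<And>i j. i \<ge> 1 \<Longrightarrow> j \<ge> 1 \<Longrightarrow> f i \<circ> f j = f j \<circ> f i"
  shows "fcomp_seq f m \<circ> fcomp_seq f n = fcomp_seq f n \<circ> fcomp_seq f m"
proof (induction m)
  case (Suc m)
  have "fcomp_seq f (Suc m) \<circ> fcomp_seq f n = f (Suc m) \<circ> (fcomp_seq f n \<circ> fcomp_seq f m)"
    using Suc.IH by (simp only: fcomp_seq.simps comp_assoc)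
  also have "\<dots> = (f (Suc m) \<circ> fcomp_seq f n) \<circ> fcomp_seq f m"
    by (simp only: comp_assoc)
  also have "\<dots> = (fcomp_seq f n \<circ> f (Suc m)) \<circ> fcomp_seq f m"
    using assms by (simp only: fcomp_seq_commute_single[of f "Suc m" n])
  also have "\<dots> = fcomp_seq f n \<circ> fcomp_seq f (Suc m)"
    by (simp only: fcomp_seq.simps comp_assoc)
  finally show ?case .
qed simp

lemma continuous_on_fcomp_seq:
  assumes "\<And>n. n \<ge> 1 \<Longrightarrow> continuous_on UNIV (f n)"
  shows "continuous_on UNIV (fcomp_seq f n)"
proof (induction n)
  case (Suc n)
  then show ?case
    using assms[of "Suc n"] by (auto intro: continuous_on_compose2)
qed simp

lemma fcomp_seq_induced: "fcomp_seq (induced f) n = image (fcomp_seq f n)"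
  by (induction n) (simp_all add: induced_def fun_eq_iff image_comp)

lemma na_weakly_mixing_imp_na_transitive:
  "na_weakly_mixing T g \<Longrightarrow> na_transitive T g"
  unfolding na_weakly_mixing_def na_transitive_def by blast

lemma na_weakly_mixingD:
  assumes "na_weakly_mixing euclidean f"
    and "open U\<^sub>1" "U\<^sub>1 \<noteq> {}" "open U\<^sub>2" "U\<^sub>2 \<noteq> {}" "open V\<^sub>1" "V\<^sub>1 \<noteq> {}" "open V\<^sub>2" "V\<^sub>2 \<noteq> {}"
  shows "\<exists>n\<ge>1. fcomp_seq f n ` U\<^sub>1 \<inter> V\<^sub>1 \<noteq> {} \<and> fcomp_seq f n ` U\<^sub>2 \<inter> V\<^sub>2 \<noteq> {}"
  using assms(1) unfolding na_weakly_mixing_def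
  by (metis assms(2-) open_openin)

text \<open>The extra pair \<open>(A\<^sub>0, B\<^sub>0)\<close> strengthens the induction. For a new pair \<open>(A, B)\<close>, choose
  \<open>m\<close> for the pairs \<open>(A\<^sub>0, A)\<close>, \<open>(B\<^sub>0, B)\<close> and shrink \<open>(A\<^sub>0, B\<^sub>0)\<close> to
  \<open>(A\<^sub>0 \<inter> f\<^sub>m\<^sup>-\<^sup>1 A, B\<^sub>0 \<inter> f\<^sub>m\<^sup>-\<^sup>1 B)\<close>; a point \<open>x\<close> of the first with \<open>f\<^sub>n x\<close> in the second
  gives \<open>f\<^sub>n (f\<^sub>m x) = f\<^sub>m (f\<^sub>n x) \<in> B\<close> with \<open>f\<^sub>m x \<in> A\<close>.\<close>
lemma na_weakly_mixing_finite_pairs: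
  fixes f :: "nat \<Rightarrow> 'a::topological_space \<Rightarrow> 'a"
  assumes wm: "na_weakly_mixing euclidean f"
    and cont: "\<And>n. continuous_on UNIV (fcomp_seq f n)"
    and comm: "\<And>m n. fcomp_seq f m \<circ> fcomp_seq f n = fcomp_seq f n \<circ> fcomp_seq f m"
    and "finite P" and "\<forall>(A, B)\<in>P. open A \<and> A \<noteq> {} \<and> open B \<and> B \<noteq> {}"
    and "open A\<^sub>0" "A\<^sub>0 \<noteq> {}" "open B\<^sub>0" "B\<^sub>0 \<noteq> {}"
  shows "\<exists>n\<ge>1. fcomp_seq f n ` A\<^sub>0 \<inter> B\<^sub>0 \<noteq> {} \<and> (\<forall>(A, B)\<in>P. fcomp_seq f n ` A \<inter> B \<noteq> {})"
  using assms(4-)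
proof (induction P arbitrary: A\<^sub>0 B\<^sub>0 rule: finite_induct)
  case empty
  show ?case
    using na_weakly_mixingD[OF wm empty.prems(2,3,2,3,4,5,4,5)] by simp
next
  case (insert p P)
  obtain A B where p: "p = (A, B)" by (cases p)
  with insert.prems(1) have AB: "open A" "A \<noteq> {}" "open B" "B \<noteq> {}"
    by auto
  have P: "\<forall>(A, B)\<in>P. open A \<and> A \<noteq> {} \<and> open B \<and> B \<noteq> {}"
    using insert.prems(1) by simp
  obtain m where "fcomp_seq f m ` A\<^sub>0 \<inter> A \<noteq> {}" "fcomp_seq f m ` B\<^sub>0 \<inter> B \<noteq> {}"
    using na_weakly_mixingD[OF wm insert.prems(2-5) AB] by blast
  then have ne: "A\<^sub>0 \<inter> fcomp_seq f m -` A \<noteq> {}" "B\<^sub>0 \<inter> fcomp_seq f m -` B \<noteq> {}"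
    by auto
  have op: "open (A\<^sub>0 \<inter> fcomp_seq f m -` A)" "open (B\<^sub>0 \<inter> fcomp_seq f m -` B)"
    using insert.prems(2,4) AB(1,3) by (auto intro!: open_Int open_vimage cont)
  obtain n where n: "n \<ge> 1" "\<forall>(A, B)\<in>P. fcomp_seq f n ` A \<inter> B \<noteq> {}"
      and "fcomp_seq f n ` (A\<^sub>0 \<inter> fcomp_seq f m -` A) \<inter> (B\<^sub>0 \<inter> fcomp_seq f m -` B) \<noteq> {}"
    using insert.IH[OF P op(1) ne(1) op(2) ne(2)] by blast
  then obtain x where x: "x \<in> A\<^sub>0" "fcomp_seq f m x \<in> A" "fcomp_seq f n x \<in> B\<^sub>0"
      "fcomp_seq f m (fcomp_seq f n x) \<in> B"
    by auto
  then have "fcomp_seq f n (fcomp_seq f m x) \<in> B"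
    using fun_cong[OF comm[of m n], of x] by simp
  with x have "fcomp_seq f n ` A\<^sub>0 \<inter> B\<^sub>0 \<noteq> {}" "fcomp_seq f n ` A \<inter> B \<noteq> {}"
    by blast+
  with n p show ?case
    by (auto intro!: exI[of _ n])
qed

definition vietoris_subbasis :: "'a::topological_space set set set" where
  "vietoris_subbasis =
     {{K \<in> hyperspace. K \<subseteq> U} | U. open U} \<union> {{K \<in> hyperspace. K \<inter> U \<noteq> {}} | U. open U}"

lemma vietoris_eq: "vietoris = topology_generated_by vietoris_subbasis"
  unfolding vietoris_def vietoris_subbasis_def ..

definition vietoris_basic :: "'a::topological_space set set \<Rightarrow> 'a set set" where
  "vietoris_basic W = {K \<in> hyperspace. K \<subseteq> \<Union>W \<and> (\<forall>U\<in>W. K \<inter> U \<noteq> {})}"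

lemma openin_vietoris_subset: "open U \<Longrightarrow> openin vietoris {K \<in> hyperspace. K \<subseteq> U}"
  unfolding vietoris_eq openin_topology_generated_by_iff vietoris_subbasis_def
  by (rule generate_topology_on.Basis) blast

lemma openin_vietoris_meets: "open U \<Longrightarrow> openin vietoris {K \<in> hyperspace. K \<inter> U \<noteq> {}}"
  unfolding vietoris_eq openin_topology_generated_by_iff vietoris_subbasis_def
  by (rule generate_topology_on.Basis) blast

lemma mem_vietoris_basic: "K \<in> vietoris_basic W \<longleftrightarrow> K \<in> hyperspace \<and> K \<subseteq> \<Union>W \<and> (\<forall>U\<in>W. K \<inter> U \<noteq> {})"
  by (simp add: vietoris_basic_def)

lemma vietoris_basic_Int_refine:
  assumes "finite W\<^sub>1" "finite W\<^sub>2" "\<forall>U\<in>W\<^sub>1. open U" "\<forall>U\<in>W\<^sub>2. open U"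
    and "K \<in> vietoris_basic W\<^sub>1" "K \<in> vietoris_basic W\<^sub>2"
  obtains W where "finite W" "\<forall>U\<in>W. open U" "K \<in> vietoris_basic W" "vietoris_basic W \<subseteq> vietoris_basic W\<^sub>1 \<inter> vietoris_basic W\<^sub>2"
proof -
  have K: "K \<in> hyperspace" "K \<subseteq> \<Union>W\<^sub>1" "K \<subseteq> \<Union>W\<^sub>2" "\<forall>U\<in>W\<^sub>1 \<union> W\<^sub>2. K \<inter> U \<noteq> {}"
    using assms(5,6) unfolding mem_vietoris_basic by auto
  define W where "W = {U\<^sub>1 \<inter> U\<^sub>2 | U\<^sub>1 U\<^sub>2. U\<^sub>1 \<in> W\<^sub>1 \<and> U\<^sub>2 \<in> W\<^sub>2 \<and> K \<inter> (U\<^sub>1 \<inter> U\<^sub>2) \<noteq> {}}"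
  have W_I: "U\<^sub>1 \<inter> U\<^sub>2 \<in> W" if "U\<^sub>1 \<in> W\<^sub>1" "U\<^sub>2 \<in> W\<^sub>2" "y \<in> K \<inter> U\<^sub>1 \<inter> U\<^sub>2" for U\<^sub>1 U\<^sub>2 y
    using that unfolding W_def by blast
  have W_E: "\<exists>U\<^sub>1\<in>W\<^sub>1. \<exists>U\<^sub>2\<in>W\<^sub>2. U = U\<^sub>1 \<inter> U\<^sub>2 \<and> K \<inter> U \<noteq> {}" if "U \<in> W" for U
    using that unfolding W_def by blast
  have K_split: "\<exists>U\<^sub>1\<in>W\<^sub>1. \<exists>U\<^sub>2\<in>W\<^sub>2. y \<in> U\<^sub>1 \<inter> U\<^sub>2" if "y \<in> K" for y
    using that K(2,3) by blast
  have "W \<subseteq> (\<lambda>(U\<^sub>1, U\<^sub>2). U\<^sub>1 \<inter> U\<^sub>2) ` (W\<^sub>1 \<times> W\<^sub>2)"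
    unfolding W_def by auto
  then have "finite W"
    using assms(1,2) by (rule finite_subset[OF _ finite_imageI[OF finite_cartesian_product]])
  moreover have "\<forall>U\<in>W. open U"
    using W_E assms(3,4) by blast
  moreover have "K \<subseteq> \<Union>W"
  proof
    fix y assume "y \<in> K"
    with K_split obtain U\<^sub>1 U\<^sub>2 where "U\<^sub>1 \<in> W\<^sub>1" "U\<^sub>2 \<in> W\<^sub>2" "y \<in> U\<^sub>1 \<inter> U\<^sub>2" by blast
    with \<open>y \<in> K\<close> W_I show "y \<in> \<Union>W" by blast
  qed
  then have "K \<in> vietoris_basic W"
    using K(1) W_E unfolding mem_vietoris_basic by blast
  moreover have "vietoris_basic W \<subseteq> vietoris_basic W\<^sub>1 \<inter> vietoris_basic W\<^sub>2"
  proof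
    fix L assume L: "L \<in> vietoris_basic W"
    have "L \<inter> U \<noteq> {}" if U: "U \<in> W\<^sub>1 \<union> W\<^sub>2" for U
    proof -
      obtain y where y: "y \<in> K" "y \<in> U"
        using U K(4) by blast
      then obtain U\<^sub>1 U\<^sub>2 where U\<^sub>1\<^sub>2: "U\<^sub>1 \<in> W\<^sub>1" "U\<^sub>2 \<in> W\<^sub>2" "y \<in> U\<^sub>1 \<inter> U\<^sub>2"
        using K_split by blast
      have "U \<inter> U\<^sub>2 \<in> W \<or> U\<^sub>1 \<inter> U \<in> W"
        using U y U\<^sub>1\<^sub>2 W_I by blast
      with L show ?thesis
        unfolding mem_vietoris_basic by blast
    qed
    moreover have "\<Union>W \<subseteq> \<Union>W\<^sub>1 \<inter> \<Union>W\<^sub>2"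
      using W_E by blast
    ultimately show "L \<in> vietoris_basic W\<^sub>1 \<inter> vietoris_basic W\<^sub>2"
      using L unfolding Int_iff mem_vietoris_basic by blast
  qed
  ultimately show ?thesis by (rule that)
qed

lemma openin_vietoris_imp_basic_nbhd:
  assumes "openin vietoris \<O>" "K \<in> \<O>"
  shows "\<exists>W. finite W \<and> (\<forall>U\<in>W. open U) \<and> K \<in> vietoris_basic W \<and> vietoris_basic W \<subseteq> \<O>"
proof -
  have "generate_topology_on vietoris_subbasis \<O>"
    using assms(1) unfolding vietoris_eq openin_topology_generated_by_iff .
  then show ?thesis
    using assms(2)
  proof (induction arbitrary: K rule: generate_topology_on.induct)
    case (Int a b)
    obtain W\<^sub>1 where W\<^sub>1: "finite W\<^sub>1" "\<forall>U\<in>W\<^sub>1. open U" "K \<in> vietoris_basic W\<^sub>1" "vietoris_basic W\<^sub>1 \<subseteq> a"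
      using Int.IH(1) Int.prems by blast
    obtain W\<^sub>2 where W\<^sub>2: "finite W\<^sub>2" "\<forall>U\<in>W\<^sub>2. open U" "K \<in> vietoris_basic W\<^sub>2" "vietoris_basic W\<^sub>2 \<subseteq> b"
      using Int.IH(2) Int.prems by blast
    obtain W where "finite W" "\<forall>U\<in>W. open U" "K \<in> vietoris_basic W" "vietoris_basic W \<subseteq> vietoris_basic W\<^sub>1 \<inter> vietoris_basic W\<^sub>2"
      using vietoris_basic_Int_refine[OF W\<^sub>1(1) W\<^sub>2(1) W\<^sub>1(2) W\<^sub>2(2) W\<^sub>1(3) W\<^sub>2(3)] .
    with W\<^sub>1(4) W\<^sub>2(4) show ?case by blast
  next
    case (UN \<K>)
    from UN.prems obtain k where k: "k \<in> \<K>" "K \<in> k" by blast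
    from UN.IH[OF k] obtain W where "finite W" "\<forall>U\<in>W. open U" "K \<in> vietoris_basic W" "vietoris_basic W \<subseteq> k"
      by blast
    with k(1) show ?case by blast
  next
    case (Basis s)
    then consider U where "open U" "s = {K \<in> hyperspace. K \<subseteq> U}"
      | U where "open U" "s = {K \<in> hyperspace. K \<inter> U \<noteq> {}}"
      unfolding vietoris_subbasis_def by blast
    then show ?case
    proof cases
      case 1
      then show ?thesis
        using Basis.prems by (intro exI[of _ "{U}"]) (auto simp: vietoris_basic_def hyperspace_def)
    next
      case 2
      then show ?thesis
        using Basis.prems by (intro exI[of _ "{UNIV, U}"]) (auto simp: vietoris_basic_def hyperspace_def)
    qed
  qed simp
qed

lemma openin_vietoris_contains_basic:
  assumes "openin vietoris \<O>" "\<O> \<noteq> {}"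
  shows "\<exists>W. finite W \<and> W \<noteq> {} \<and> (\<forall>U\<in>W. open U \<and> U \<noteq> {}) \<and> vietoris_basic W \<subseteq> \<O>"
proof -
  obtain K where "K \<in> \<O>"
    using assms(2) by blast
  then obtain W where W: "finite W" "\<forall>U\<in>W. open U" "K \<in> vietoris_basic W" "vietoris_basic W \<subseteq> \<O>"
    using openin_vietoris_imp_basic_nbhd[OF assms(1)] by blast
  then have "K \<noteq> {}" "K \<subseteq> \<Union>W" "\<forall>U\<in>W. K \<inter> U \<noteq> {}"
    unfolding mem_vietoris_basic hyperspace_def by auto
  then have "W \<noteq> {}" "\<forall>U\<in>W. U \<noteq> {}"
    by auto
  with W show ?thesis by blast
qed

text \<open>The finite set \<open>K\<close> consists of one witness \<open>x \<in> U\<close> with \<open>g x \<in> V\<close> for each \<open>(U, V) \<in> A \<times> B\<close>.\<close>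
lemma image_vietoris_basic_meets:
  fixes g :: "'a::topological_space \<Rightarrow> 'b::topological_space"
  assumes "finite A" "finite B" "A \<noteq> {}" "B \<noteq> {}"
    and "\<forall>U\<in>A. \<forall>V\<in>B. g ` U \<inter> V \<noteq> {}"
  shows "image g ` vietoris_basic A \<inter> vietoris_basic B \<noteq> {}"
proof -
  have "\<forall>p\<in>A \<times> B. \<exists>y. y \<in> fst p \<and> g y \<in> snd p"
    using assms(5) by (auto simp: image_iff)
  from bchoice[OF this] obtain x where x: "\<forall>p\<in>A \<times> B. x p \<in> fst p \<and> g (x p) \<in> snd p"
    by blast
  define K where "K = x ` (A \<times> B)"
  have "finite K" "K \<noteq> {}"
    unfolding K_def using assms(1-4) by auto
  then have "K \<in> hyperspace" "g ` K \<in> hyperspace"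
    unfolding hyperspace_def by (auto intro: finite_imp_compact)
  moreover have "K \<subseteq> \<Union>A" "g ` K \<subseteq> \<Union>B"
    unfolding K_def using x by fastforce+
  moreover have "K \<inter> U \<noteq> {}" if "U \<in> A" for U
  proof -
    obtain V where "V \<in> B" using assms(4) by blast
    with that x show ?thesis unfolding K_def by fastforce
  qed
  moreover have "g ` K \<inter> V \<noteq> {}" if "V \<in> B" for V
  proof -
    obtain U where "U \<in> A" using assms(3) by blast
    with that x show ?thesis unfolding K_def by fastforce
  qed
  ultimately have "K \<in> vietoris_basic A" "g ` K \<in> vietoris_basic B"
    unfolding mem_vietoris_basic by blast+
  then show ?thesis by blast
qed

lemma na_weakly_mixing_induced:
  fixes f :: "nat \<Rightarrow> 'a::topological_space \<Rightarrow> 'a"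
  assumes wm: "na_weakly_mixing euclidean f"
    and cont: "\<And>n. continuous_on UNIV (fcomp_seq f n)"
    and comm: "\<And>m n. fcomp_seq f m \<circ> fcomp_seq f n = fcomp_seq f n \<circ> fcomp_seq f m"
  shows "na_weakly_mixing vietoris (induced f)"
  unfolding na_weakly_mixing_def fcomp_seq_induced
proof (intro allI impI, elim conjE)
  fix \<U>\<^sub>1 \<U>\<^sub>2 \<V>\<^sub>1 \<V>\<^sub>2 :: "'a set set"
  assume "openin vietoris \<U>\<^sub>1" "\<U>\<^sub>1 \<noteq> {}" "openin vietoris \<U>\<^sub>2" "\<U>\<^sub>2 \<noteq> {}"
    "openin vietoris \<V>\<^sub>1" "\<V>\<^sub>1 \<noteq> {}" "openin vietoris \<V>\<^sub>2" "\<V>\<^sub>2 \<noteq> {}"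
  note nbhd = openin_vietoris_contains_basic[OF this(1,2)] openin_vietoris_contains_basic[OF this(3,4)]
    openin_vietoris_contains_basic[OF this(5,6)] openin_vietoris_contains_basic[OF this(7,8)]
  obtain A\<^sub>1 where A\<^sub>1: "finite A\<^sub>1" "A\<^sub>1 \<noteq> {}" "\<forall>U\<in>A\<^sub>1. open U \<and> U \<noteq> {}" "vietoris_basic A\<^sub>1 \<subseteq> \<U>\<^sub>1"
    using nbhd(1) by blast
  obtain A\<^sub>2 where A\<^sub>2: "finite A\<^sub>2" "A\<^sub>2 \<noteq> {}" "\<forall>U\<in>A\<^sub>2. open U \<and> U \<noteq> {}" "vietoris_basic A\<^sub>2 \<subseteq> \<U>\<^sub>2"
    using nbhd(2) by blast
  obtain B\<^sub>1 where B\<^sub>1: "finite B\<^sub>1" "B\<^sub>1 \<noteq> {}" "\<forall>V\<in>B\<^sub>1. open V \<and> V \<noteq> {}" "vietoris_basic B\<^sub>1 \<subseteq> \<V>\<^sub>1"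
    using nbhd(3) by blast
  obtain B\<^sub>2 where B\<^sub>2: "finite B\<^sub>2" "B\<^sub>2 \<noteq> {}" "\<forall>V\<in>B\<^sub>2. open V \<and> V \<noteq> {}" "vietoris_basic B\<^sub>2 \<subseteq> \<V>\<^sub>2"
    using nbhd(4) by blast
  let ?P = "A\<^sub>1 \<times> B\<^sub>1 \<union> A\<^sub>2 \<times> B\<^sub>2"
  have "finite ?P"
    using A\<^sub>1(1) A\<^sub>2(1) B\<^sub>1(1) B\<^sub>2(1) by simp
  moreover have "\<forall>(A, B)\<in>?P. open A \<and> A \<noteq> {} \<and> open B \<and> B \<noteq> {}"
    using A\<^sub>1(3) A\<^sub>2(3) B\<^sub>1(3) B\<^sub>2(3) by blast
  ultimately obtain n where n: "n \<ge> 1" "\<forall>(A, B)\<in>?P. fcomp_seq f n ` A \<inter> B \<noteq> {}"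
    using na_weakly_mixing_finite_pairs[OF wm cont comm, of ?P UNIV UNIV] by auto
  have "image (fcomp_seq f n) ` vietoris_basic A\<^sub>1 \<inter> vietoris_basic B\<^sub>1 \<noteq> {}"
    using n(2) by (intro image_vietoris_basic_meets A\<^sub>1(1,2) B\<^sub>1(1,2)) blast
  moreover have "image (fcomp_seq f n) ` vietoris_basic A\<^sub>2 \<inter> vietoris_basic B\<^sub>2 \<noteq> {}"
    using n(2) by (intro image_vietoris_basic_meets A\<^sub>2(1,2) B\<^sub>2(1,2)) blast
  ultimately show "\<exists>n\<ge>1. image (fcomp_seq f n) ` \<U>\<^sub>1 \<inter> \<V>\<^sub>1 \<noteq> {} \<and>
      image (fcomp_seq f n) ` \<U>\<^sub>2 \<inter> \<V>\<^sub>2 \<noteq> {}"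
    using n(1) A\<^sub>1(4) A\<^sub>2(4) B\<^sub>1(4) B\<^sub>2(4) by blast
qed

lemma na_transitiveD:
  "na_transitive T g \<Longrightarrow> openin T U \<Longrightarrow> U \<noteq> {} \<Longrightarrow> openin T V \<Longrightarrow> V \<noteq> {} \<Longrightarrow>
    \<exists>n\<ge>1. fcomp_seq g n ` U \<inter> V \<noteq> {}"
  unfolding na_transitive_def by blast

lemma na_transitive_induced_meets_two:
  fixes f :: "nat \<Rightarrow> 'a::topological_space \<Rightarrow> 'a"
  assumes "na_transitive vietoris (induced f)"
    and "open U" "U \<noteq> {}" "open V\<^sub>1" "V\<^sub>1 \<noteq> {}" "open V\<^sub>2" "V\<^sub>2 \<noteq> {}"
  shows "\<exists>n\<ge>1. fcomp_seq f n ` U \<inter> V\<^sub>1 \<noteq> {} \<and> fcomp_seq f n ` U \<inter> V\<^sub>2 \<noteq> {}"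
proof -
  obtain a b\<^sub>1 b\<^sub>2 where "a \<in> U" "b\<^sub>1 \<in> V\<^sub>1" "b\<^sub>2 \<in> V\<^sub>2"
    using assms(3,5,7) by blast
  define \<U> where "\<U> = {K \<in> hyperspace. K \<subseteq> U}"
  define \<V> where "\<V> = {K \<in> hyperspace. K \<inter> V\<^sub>1 \<noteq> {}} \<inter> {K \<in> hyperspace. K \<inter> V\<^sub>2 \<noteq> {}}"
  have "openin vietoris \<U>" "openin vietoris \<V>"
    unfolding \<U>_def \<V>_def using assms(2,4,6)
    by (simp_all add: openin_vietoris_subset openin_vietoris_meets openin_Int)
  moreover have "{a} \<in> \<U>" "{b\<^sub>1, b\<^sub>2} \<in> \<V>"
    unfolding \<U>_def \<V>_def using \<open>a \<in> U\<close> \<open>b\<^sub>1 \<in> V\<^sub>1\<close> \<open>b\<^sub>2 \<in> V\<^sub>2\<close>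
    by (auto simp: hyperspace_def)
  then have "\<U> \<noteq> {}" "\<V> \<noteq> {}"
    by auto
  ultimately obtain n K where "n \<ge> 1" "K \<in> \<U>" "fcomp_seq f n ` K \<in> \<V>"
    using na_transitiveD[OF assms(1), of \<U> \<V>] unfolding fcomp_seq_induced by blast
  then show ?thesis
    unfolding \<U>_def \<V>_def by blast
qed

text \<open>First choose \<open>m\<close> with \<open>f\<^sub>m U\<^sub>2\<close> meeting \<open>U\<^sub>1\<close> and \<open>V\<^sub>1\<close>, then a common \<open>n\<close> sending
  \<open>U\<^sub>2 \<inter> f\<^sub>m\<^sup>-\<^sup>1 U\<^sub>1\<close> into both \<open>V\<^sub>2\<close> and \<open>f\<^sub>m\<^sup>-\<^sup>1 V\<^sub>1\<close>; commuting \<open>f\<^sub>m\<close> and \<open>f\<^sub>n\<close> turns the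
  second hit into a point of \<open>f\<^sub>n U\<^sub>1 \<inter> V\<^sub>1\<close>.\<close>
lemma na_transitive_induced_imp_na_weakly_mixing:
  fixes f :: "nat \<Rightarrow> 'a::topological_space \<Rightarrow> 'a"
  assumes tr: "na_transitive vietoris (induced f)"
    and cont: "\<And>n. continuous_on UNIV (fcomp_seq f n)"
    and comm: "\<And>m n. fcomp_seq f m \<circ> fcomp_seq f n = fcomp_seq f n \<circ> fcomp_seq f m"
  shows "na_weakly_mixing euclidean f"
  unfolding na_weakly_mixing_def open_openin[symmetric]
proof (intro allI impI, elim conjE)
  fix U\<^sub>1 U\<^sub>2 V\<^sub>1 V\<^sub>2 :: "'a set"
  assume U\<^sub>1: "open U\<^sub>1" "U\<^sub>1 \<noteq> {}" and U\<^sub>2: "open U\<^sub>2" "U\<^sub>2 \<noteq> {}"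
    and V\<^sub>1: "open V\<^sub>1" "V\<^sub>1 \<noteq> {}" and V\<^sub>2: "open V\<^sub>2" "V\<^sub>2 \<noteq> {}"
  obtain m where "fcomp_seq f m ` U\<^sub>2 \<inter> U\<^sub>1 \<noteq> {}" "fcomp_seq f m ` U\<^sub>2 \<inter> V\<^sub>1 \<noteq> {}"
    using na_transitive_induced_meets_two[OF tr U\<^sub>2 U\<^sub>1 V\<^sub>1] by blast
  then have ne: "U\<^sub>2 \<inter> fcomp_seq f m -` U\<^sub>1 \<noteq> {}" "fcomp_seq f m -` V\<^sub>1 \<noteq> {}"
    by auto
  have op: "open (U\<^sub>2 \<inter> fcomp_seq f m -` U\<^sub>1)" "open (fcomp_seq f m -` V\<^sub>1)"
    using U\<^sub>1(1) U\<^sub>2(1) V\<^sub>1(1) by (auto intro!: open_Int open_vimage cont)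
  obtain n where n: "n \<ge> 1"
    "fcomp_seq f n ` (U\<^sub>2 \<inter> fcomp_seq f m -` U\<^sub>1) \<inter> V\<^sub>2 \<noteq> {}"
    "fcomp_seq f n ` (U\<^sub>2 \<inter> fcomp_seq f m -` U\<^sub>1) \<inter> fcomp_seq f m -` V\<^sub>1 \<noteq> {}"
    using na_transitive_induced_meets_two[OF tr op(1) ne(1) V\<^sub>2 op(2) ne(2)] by blast
  then have "fcomp_seq f n ` U\<^sub>2 \<inter> V\<^sub>2 \<noteq> {}"
    by blast
  moreover obtain z where "fcomp_seq f m z \<in> U\<^sub>1" "fcomp_seq f m (fcomp_seq f n z) \<in> V\<^sub>1"
    using n(3) by blast
  then have "fcomp_seq f n ` U\<^sub>1 \<inter> V\<^sub>1 \<noteq> {}"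
    using fun_cong[OF comm[of m n], of z] by auto
  ultimately show "\<exists>n\<ge>1. fcomp_seq f n ` U\<^sub>1 \<inter> V\<^sub>1 \<noteq> {} \<and> fcomp_seq f n ` U\<^sub>2 \<inter> V\<^sub>2 \<noteq> {}"
    using n(1) by blast
qed

theorem theorem3p2:
  fixes f :: "nat \<Rightarrow> 'a::metric_space \<Rightarrow> 'a"
  assumes "compact (UNIV :: 'a set)"
    and "\<And>n. n \<ge> 1 \<Longrightarrow> continuous_on UNIV (f n)"
    and "\<And>i j. i \<ge> 1 \<Longrightarrow> j \<ge> 1 \<Longrightarrow> f i \<circ> f j = f j \<circ> f i"
  shows "(na_weakly_mixing euclidean f \<longleftrightarrow> na_weakly_mixing vietoris (induced f))
       \<and> (na_weakly_mixing vietoris (induced f) \<longleftrightarrow> na_transitive vietoris (induced f))"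
proof -
  have cont: "\<And>n. continuous_on UNIV (fcomp_seq f n)"
    using assms(2) by (rule continuous_on_fcomp_seq)
  have comm: "\<And>m n. fcomp_seq f m \<circ> fcomp_seq f n = fcomp_seq f n \<circ> fcomp_seq f m"
    using assms(3) by (rule fcomp_seq_commute)
  have "na_weakly_mixing euclidean f \<Longrightarrow> na_weakly_mixing vietoris (induced f)"
    by (rule na_weakly_mixing_induced[OF _ cont comm])
  moreover have "na_weakly_mixing vietoris (induced f) \<Longrightarrow> na_transitive vietoris (induced f)"
    by (rule na_weakly_mixing_imp_na_transitive)
  moreover have "na_transitive vietoris (induced f) \<Longrightarrow> na_weakly_mixing euclidean f"
    by (rule na_transitive_induced_imp_na_weakly_mixing[OF _ cont comm])
  ultimately show ?thesis by blast
qed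

end
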